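(* There exists an infinite strongly 3-separating set $M_\infty\subseteq\mathbb{N}$ with $1\in M_\infty$.
   Context: $\mathbb{N}=\{1,2,3,\dots\}$. A set $M\subseteq\mathbb{N}$ is 3-separating if $|M|\geq 3$ and for any two triples $(m_1,m_2,m_3)$ and $(n_1,n_2,n_3)$, each consisting of three distinct elements of $M$, we have $n_2(m_3-m_1)=n_1(m_3-m_2)+n_3(m_2-m_1)$ if and only if $(m_1,m_2,m_3)=(n_1,n_2,n_3)$. A set $M$ is strongly 3-separating if it is 3-separating and moreover for any two pairs $(m_1,m_2)$, $(n_1,n_2)$, each consisting of two distinct elements of $M$, we have $m_1-m_2+n_2-n_1=0$ if and only if $(m_1,m_2)=(n_1,n_2)$. *)

theory Defs
  imports Main
begin

text \<open>Subsets of the positive naturals are modelled as sets M of type nat set with 0 not in M.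
  The cardinality condition |M| >= 3 is read as: M infinite or card M >= 3.
  Arithmetic is carried out in the integers.\<close>

definition three_separating :: "nat set \<Rightarrow> bool" where
  "three_separating M \<longleftrightarrow>
     0 \<notin> M \<and> (infinite M \<or> 3 \<le> card M) \<and>
     (\<forall>m1\<in>M. \<forall>m2\<in>M. \<forall>m3\<in>M. \<forall>n1\<in>M. \<forall>n2\<in>M. \<forall>n3\<in>M.
        m1 \<noteq> m2 \<and> m1 \<noteq> m3 \<and> m2 \<noteq> m3 \<and> n1 \<noteq> n2 \<and> n1 \<noteq> n3 \<and> n2 \<noteq> n3 \<longrightarrow>
        (int n2 * (int m3 - int m1) = int n1 * (int m3 - int m2) + int n3 * (int m2 - int m1)
          \<longleftrightarrow> (m1, m2, m3) = (n1, n2, n3)))"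

definition strongly_three_separating :: "nat set \<Rightarrow> bool" where
  "strongly_three_separating M \<longleftrightarrow>
     three_separating M \<and>
     (\<forall>m1\<in>M. \<forall>m2\<in>M. \<forall>n1\<in>M. \<forall>n2\<in>M.
        m1 \<noteq> m2 \<and> n1 \<noteq> n2 \<longrightarrow>
        (int m1 - int m2 + int n2 - int n1 = 0 \<longleftrightarrow> (m1, m2) = (n1, n2)))"

end

theory Submission
  imports Defs
begin

text \<open>Call M square-sparse if every element exceeds four times the square of each smaller one.
  Given at most six elements of such a set, let X be the largest and Y the next largest, so that
  4 Y^2 < X. Writing each element in base X, with digit 1 for X itself and 0 for the others, the
  relation defining 3-separation becomes a quadratic polynomial in X whose linear and constant
  coefficients are smaller than X in absolute value; hence all three coefficients vanish. The
  leading coefficient forces X to sit in the same position of both triples, and the other two then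
  identify the remaining entries. The Sidon condition is the linear analogue of this argument, and
  a(0) = 1, a(k + 1) = 4 a(k)^2 + 1 is a square-sparse sequence.\<close>

text \<open>The determinant with rows (1, 1, 1), m and n; it vanishes iff the points (m_i, n_i) are collinear.\<close>

definition det3 :: "int \<Rightarrow> int \<Rightarrow> int \<Rightarrow> int \<Rightarrow> int \<Rightarrow> int \<Rightarrow> int" where
  "det3 m1 m2 m3 n1 n2 n3 = (m2 - m1) * (n3 - n2) - (m3 - m2) * (n2 - n1)"

lemma three_separating_equation_iff_det3:
  fixes m1 m2 m3 n1 n2 n3 :: int
  shows "n2 * (m3 - m1) = n1 * (m3 - m2) + n3 * (m2 - m1) \<longleftrightarrow> det3 m1 m2 m3 n1 n2 n3 = 0"
  by (auto simp: det3_def algebra_simps)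

lemma det3_expand:
  fixes X :: int
  shows "det3 (a1 * X + b1) (a2 * X + b2) (a3 * X + b3) (c1 * X + e1) (c2 * X + e2) (c3 * X + e3)
    = det3 a1 a2 a3 c1 c2 c3 * X\<^sup>2
      + (det3 a1 a2 a3 e1 e2 e3 + det3 b1 b2 b3 c1 c2 c3) * X + det3 b1 b2 b3 e1 e2 e3"
  by (simp add: det3_def algebra_simps power2_eq_square)

lemma abs_det3_le:
  fixes m1 m2 m3 n1 n2 n3 A C :: int
  assumes "\<bar>m2 - m1\<bar> \<le> A" "\<bar>m3 - m2\<bar> \<le> A" "\<bar>n3 - n2\<bar> \<le> C" "\<bar>n2 - n1\<bar> \<le> C"
  shows "\<bar>det3 m1 m2 m3 n1 n2 n3\<bar> \<le> 2 * A * C"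
proof -
  have "\<bar>(m2 - m1) * (n3 - n2)\<bar> \<le> A * C" "\<bar>(m3 - m2) * (n2 - n1)\<bar> \<le> A * C"
    using assms by (simp_all add: abs_mult mult_mono')
  then show ?thesis
    unfolding det3_def by linarith
qed

lemma quadratic_eq_zero_small_coeffs:
  fixes a b c X B :: int
  assumes "\<bar>b\<bar> \<le> B" "\<bar>c\<bar> \<le> B" "B < X" and eq: "a * X\<^sup>2 + b * X + c = 0"
  shows "a = 0 \<and> b = 0 \<and> c = 0"
proof -
  have X_pos: "0 < X"
    using assms by linarith
  have low: "\<bar>b * X + c\<bar> < X * X"
  proof -
    have "\<bar>b * X + c\<bar> \<le> \<bar>b\<bar> * X + \<bar>c\<bar>"
      using X_pos by (simp add: abs_mult order_trans[OF abs_triangle_ineq])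
    also have "\<dots> \<le> B * X + B"
      using assms X_pos by (intro add_mono mult_right_mono) auto
    also have "\<dots> < (B + 1) * X"
      using assms by (simp add: algebra_simps)
    also have "\<dots> \<le> X * X"
      using assms X_pos by (intro mult_right_mono) auto
    finally show ?thesis .
  qed
  have "a = 0"
  proof (rule ccontr)
    assume "a \<noteq> 0"
    then have "X * X \<le> \<bar>a * X\<^sup>2\<bar>"
      using X_pos by (simp add: abs_mult power2_eq_square mult_right_mono)
    with low eq show False
      by (simp add: add.assoc eq_neg_iff_add_eq_0[symmetric])
  qed
  moreover have "b = 0"
  proof (rule ccontr)
    assume "b \<noteq> 0"
    then have "X \<le> \<bar>b * X\<bar>"
      using X_pos by (simp add: abs_mult)
    with \<open>a = 0\<close> eq assms show False
      by (simp add: eq_neg_iff_add_eq_0[symmetric])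
  qed
  ultimately show ?thesis
    using eq by simp
qed

text \<open>For v \<in> insert X {1..Y} with Y < X, these are the two base-X digits of v.\<close>

definition high_digit :: "int \<Rightarrow> int \<Rightarrow> int" where
  "high_digit X v = of_bool (v = X)"

definition low_digit :: "int \<Rightarrow> int \<Rightarrow> int" where
  "low_digit X v = (if v = X then 0 else v)"

lemma high_low_digits: "v = high_digit X v * X + low_digit X v"
  by (simp add: high_digit_def low_digit_def)

lemma digits_at_top [simp]: "high_digit X X = 1" "low_digit X X = 0"
  by (simp_all add: high_digit_def low_digit_def)

lemma digits_below_top [simp]: "v \<noteq> X \<Longrightarrow> high_digit X v = 0" "v \<noteq> X \<Longrightarrow> low_digit X v = v"
  by (simp_all add: high_digit_def low_digit_def)

lemma abs_high_digit_diff_le: "\<bar>high_digit X u - high_digit X v\<bar> \<le> 1"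
  by (simp add: high_digit_def)

lemma abs_low_digit_diff_le:
  fixes X Y u v :: int
  assumes "0 \<le> Y" "u \<in> insert X {1..Y}" "v \<in> insert X {1..Y}"
  shows "\<bar>low_digit X u - low_digit X v\<bar> \<le> Y"
  using assms by (auto simp: low_digit_def)

lemma eq_if_diff_eq_and_cross_eq:
  fixes a b c d :: int
  assumes "b - a = d - c" "a * (d - c) = c * (b - a)" "a \<noteq> b"
  shows "a = c \<and> b = d"
proof -
  have "(b - a) * (a - c) = a * (d - c) - c * (b - a)"
    by (simp add: assms(1) right_diff_distrib left_diff_distrib)
  with assms(2) have "(b - a) * (a - c) = 0"
    by simp
  with assms show ?thesis
    by auto
qed

lemma det3_digits_eq_zero:
  fixes X Y m1 m2 m3 n1 n2 n3 :: int
  defines "d \<equiv> high_digit X" and "r \<equiv> low_digit X"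
  assumes "1 \<le> Y" "4 * Y\<^sup>2 < X"
    and range: "{m1, m2, m3, n1, n2, n3} \<subseteq> insert X {1..Y}"
    and det: "det3 m1 m2 m3 n1 n2 n3 = 0"
  shows "det3 (d m1) (d m2) (d m3) (d n1) (d n2) (d n3) = 0"
    and "det3 (d m1) (d m2) (d m3) (r n1) (r n2) (r n3) + det3 (r m1) (r m2) (r m3) (d n1) (d n2) (d n3) = 0"
    and "det3 (r m1) (r m2) (r m3) (r n1) (r n2) (r n3) = 0"
proof -
  have r_m: "\<bar>r m2 - r m1\<bar> \<le> Y" "\<bar>r m3 - r m2\<bar> \<le> Y"
    and r_n: "\<bar>r n3 - r n2\<bar> \<le> Y" "\<bar>r n2 - r n1\<bar> \<le> Y"
    using range \<open>1 \<le> Y\<close> unfolding r_def by (simp_all add: abs_low_digit_diff_le)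
  have d_m: "\<bar>d m2 - d m1\<bar> \<le> 1" "\<bar>d m3 - d m2\<bar> \<le> 1"
    and d_n: "\<bar>d n3 - d n2\<bar> \<le> 1" "\<bar>d n2 - d n1\<bar> \<le> 1"
    unfolding d_def by (rule abs_high_digit_diff_le)+
  have "Y \<le> Y\<^sup>2"
    using \<open>1 \<le> Y\<close> by (simp add: power2_eq_square)
  let ?high = "det3 (d m1) (d m2) (d m3) (d n1) (d n2) (d n3)"
  let ?mid = "det3 (d m1) (d m2) (d m3) (r n1) (r n2) (r n3)
    + det3 (r m1) (r m2) (r m3) (d n1) (d n2) (d n3)"
  let ?low = "det3 (r m1) (r m2) (r m3) (r n1) (r n2) (r n3)"
  have "\<bar>?mid\<bar> \<le> 4 * Y\<^sup>2"
    using abs_det3_le[OF d_m r_n] abs_det3_le[OF r_m d_n] \<open>Y \<le> Y\<^sup>2\<close>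
    by linarith
  moreover have "\<bar>?low\<bar> \<le> 4 * Y\<^sup>2"
    using abs_det3_le[OF r_m r_n] \<open>1 \<le> Y\<close> by (simp add: power2_eq_square)
  moreover have "?high * X\<^sup>2 + ?mid * X + ?low = 0"
  proof -
    have "det3 m1 m2 m3 n1 n2 n3 = det3 (d m1 * X + r m1) (d m2 * X + r m2) (d m3 * X + r m3)
        (d n1 * X + r n1) (d n2 * X + r n2) (d n3 * X + r n3)"
      unfolding d_def r_def by (simp only: high_low_digits[symmetric])
    with det show ?thesis
      by (simp only: det3_expand)
  qed
  ultimately show "?high = 0" "?mid = 0" "?low = 0"
    using quadratic_eq_zero_small_coeffs \<open>4 * Y\<^sup>2 < X\<close> by blast+
qed

lemma high_digits_unit_vector:
  fixes X v1 v2 v3 :: int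
  assumes "X \<in> {v1, v2, v3}" "v1 \<noteq> v2" "v1 \<noteq> v3" "v2 \<noteq> v3"
  shows "(high_digit X v1, high_digit X v2, high_digit X v3) \<in> {(1, 0, 0), (0, 1, 0), (0, 0, 1)}"
  using assms by (auto simp: high_digit_def)

lemma det3_digits_top_in_both:
  fixes X m1 m2 m3 n1 n2 n3 :: int
  defines "d \<equiv> high_digit X" and "r \<equiv> low_digit X"
  assumes top: "X \<in> {m1, m2, m3, n1, n2, n3}"
    and distinct: "m1 \<noteq> m2" "m1 \<noteq> m3" "m2 \<noteq> m3" "n1 \<noteq> n2" "n1 \<noteq> n3" "n2 \<noteq> n3"
    and mid: "det3 (d m1) (d m2) (d m3) (r n1) (r n2) (r n3) + det3 (r m1) (r m2) (r m3) (d n1) (d n2) (d n3) = 0"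
  shows "X \<in> {m1, m2, m3} \<and> X \<in> {n1, n2, n3}"
proof (rule ccontr)
  assume "\<not> ?thesis"
  with top consider "X \<in> {m1, m2, m3}" "X \<notin> {n1, n2, n3}" | "X \<notin> {m1, m2, m3}" "X \<in> {n1, n2, n3}"
    by blast
  then show False
  proof cases
    case 1
    then have "d n1 = 0" "d n2 = 0" "d n3 = 0" "r n1 = n1" "r n2 = n2" "r n3 = n3"
      unfolding d_def r_def by auto
    with mid have "det3 (d m1) (d m2) (d m3) n1 n2 n3 = 0"
      by (simp add: det3_def)
    with high_digits_unit_vector[OF 1(1)] distinct show False
      unfolding d_def by (auto simp: det3_def)
  next
    case 2
    then have "d m1 = 0" "d m2 = 0" "d m3 = 0" "r m1 = m1" "r m2 = m2" "r m3 = m3"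
      unfolding d_def r_def by auto
    with mid have "det3 m1 m2 m3 (d n1) (d n2) (d n3) = 0"
      by (simp add: det3_def)
    with high_digits_unit_vector[OF 2(2)] distinct show False
      unfolding d_def by (auto simp: det3_def)
  qed
qed

lemma det3_eq_zero_imp_eq:
  fixes X Y m1 m2 m3 n1 n2 n3 :: int
  assumes "1 \<le> Y" "4 * Y\<^sup>2 < X"
    and range: "{m1, m2, m3, n1, n2, n3} \<subseteq> insert X {1..Y}"
    and top: "X \<in> {m1, m2, m3, n1, n2, n3}"
    and distinct: "m1 \<noteq> m2" "m1 \<noteq> m3" "m2 \<noteq> m3" "n1 \<noteq> n2" "n1 \<noteq> n3" "n2 \<noteq> n3"
    and "det3 m1 m2 m3 n1 n2 n3 = 0"
  shows "m1 = n1 \<and> m2 = n2 \<and> m3 = n3"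
proof -
  let ?d = "high_digit X" and ?r = "low_digit X"
  note high = det3_digits_eq_zero(1)[OF assms(1-3,11)]
    and mid = det3_digits_eq_zero(2)[OF assms(1-3,11)]
    and low = det3_digits_eq_zero(3)[OF assms(1-3,11)]
  have top_m: "X \<in> {m1, m2, m3}" and top_n: "X \<in> {n1, n2, n3}"
    using det3_digits_top_in_both[OF top distinct mid] by auto
  have "?d m1 = ?d n1 \<and> ?d m2 = ?d n2 \<and> ?d m3 = ?d n3"
    using high high_digits_unit_vector[OF top_m distinct(1-3)]
      high_digits_unit_vector[OF top_n distinct(4-6)]
    by (auto simp: det3_def)
  with top_m top_n consider "m1 = X" "n1 = X" | "m2 = X" "n2 = X" | "m3 = X" "n3 = X"
    by (auto simp: high_digit_def)
  then show ?thesis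
  proof cases
    case 1
    with distinct have "?d m2 = 0" "?d m3 = 0" "?d n2 = 0" "?d n3 = 0"
      "?r m2 = m2" "?r m3 = m3" "?r n2 = n2" "?r n3 = n3"
      by auto
    with 1 mid low have "m3 - m2 = n3 - n2" "m2 * (n3 - n2) = n2 * (m3 - m2)"
      by (simp_all add: det3_def algebra_simps)
    with distinct have "m2 = n2 \<and> m3 = n3"
      by (intro eq_if_diff_eq_and_cross_eq)
    with 1 show ?thesis
      by simp
  next
    case 2
    with distinct have "?d m1 = 0" "?d m3 = 0" "?d n1 = 0" "?d n3 = 0"
      "?r m1 = m1" "?r m3 = m3" "?r n1 = n1" "?r n3 = n3"
      by auto
    with 2 mid low have "m3 - m1 = n3 - n1" "m1 * (n3 - n1) = n1 * (m3 - m1)"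
      by (simp_all add: det3_def algebra_simps)
    with distinct have "m1 = n1 \<and> m3 = n3"
      by (intro eq_if_diff_eq_and_cross_eq)
    with 2 show ?thesis
      by simp
  next
    case 3
    with distinct have "?d m1 = 0" "?d m2 = 0" "?d n1 = 0" "?d n2 = 0"
      "?r m1 = m1" "?r m2 = m2" "?r n1 = n1" "?r n2 = n2"
      by auto
    with 3 mid low have "m2 - m1 = n2 - n1" "m1 * (n2 - n1) = n1 * (m2 - m1)"
      by (simp_all add: det3_def algebra_simps)
    with distinct have "m1 = n1 \<and> m2 = n2"
      by (intro eq_if_diff_eq_and_cross_eq)
    with 3 show ?thesis
      by simp
  qed
qed

lemma difference_eq_imp_eq:
  fixes X Y m1 m2 n1 n2 :: int
  assumes "1 \<le> Y" "4 * Y\<^sup>2 < X"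
    and range: "{m1, m2, n1, n2} \<subseteq> insert X {1..Y}"
    and top: "X \<in> {m1, m2, n1, n2}"
    and distinct: "m1 \<noteq> m2" "n1 \<noteq> n2"
    and eq: "m1 - m2 + n2 - n1 = 0"
  shows "m1 = n1 \<and> m2 = n2"
proof -
  let ?d = "high_digit X" and ?r = "low_digit X"
  have "Y \<le> Y\<^sup>2"
    using \<open>1 \<le> Y\<close> by (simp add: power2_eq_square)
  let ?high = "?d m1 - ?d m2 + ?d n2 - ?d n1"
  let ?low = "?r m1 - ?r m2 + ?r n2 - ?r n1"
  have "\<bar>?d m1 - ?d m2\<bar> \<le> 1" "\<bar>?d n2 - ?d n1\<bar> \<le> 1"
    by (rule abs_high_digit_diff_le)+
  moreover have "\<bar>?r m1 - ?r m2\<bar> \<le> Y" "\<bar>?r n2 - ?r n1\<bar> \<le> Y"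
    using range \<open>1 \<le> Y\<close> by (simp_all add: abs_low_digit_diff_le)
  ultimately have "\<bar>?high\<bar> \<le> 2 * Y" "\<bar>?low\<bar> \<le> 2 * Y"
    using \<open>1 \<le> Y\<close> by linarith+
  moreover have "2 * Y < X"
    using \<open>Y \<le> Y\<^sup>2\<close> \<open>1 \<le> Y\<close> \<open>4 * Y\<^sup>2 < X\<close> by linarith
  moreover have "0 * X\<^sup>2 + ?high * X + ?low = 0"
    using eq high_low_digits[of m1 X] high_low_digits[of m2 X] high_low_digits[of n1 X]
      high_low_digits[of n2 X]
    by (simp add: algebra_simps)
  ultimately have "?high = 0" "?low = 0"
    using quadratic_eq_zero_small_coeffs by blast+
  with top distinct show ?thesis
    by (auto simp: high_digit_def low_digit_def split: if_splits)
qed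

definition square_sparse :: "nat set \<Rightarrow> bool" where
  "square_sparse M \<longleftrightarrow> (\<forall>x\<in>M. \<forall>y\<in>M. y < x \<longrightarrow> 4 * y\<^sup>2 < x)"

lemma square_sparse_split:
  assumes sparse: "square_sparse M" and "0 \<notin> M" "finite S" "S \<subseteq> M" "x \<in> S" "y \<in> S" "x \<noteq> y"
  shows "\<exists>X Y :: int. 1 \<le> Y \<and> 4 * Y\<^sup>2 < X \<and> int ` S \<subseteq> insert X {1..Y} \<and> X \<in> int ` S"
proof -
  define X where "X = Max S"
  define Y where "Y = Max (S - {X})"
  have "X \<in> S"
    using assms unfolding X_def by (intro Max_in) auto
  have "S - {X} \<noteq> {}"
    using assms by auto
  then have "Y \<in> S - {X}"
    using assms unfolding Y_def by (intro Max_in) auto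
  have below: "v \<le> Y" if "v \<in> S - {X}" for v
    using assms that unfolding Y_def by auto
  have "Y < X"
    using \<open>Y \<in> S - {X}\<close> assms unfolding X_def by (simp add: order.strict_iff_order)
  with sparse have "4 * Y\<^sup>2 < X"
    using \<open>X \<in> S\<close> \<open>Y \<in> S - {X}\<close> assms(4) unfolding square_sparse_def by blast
  moreover have "1 \<le> Y"
    using \<open>Y \<in> S - {X}\<close> assms(2,4) by (auto simp: Suc_le_eq intro: Nat.gr0I)
  moreover have "int ` S \<subseteq> insert (int X) {1..int Y}"
  proof (rule image_subsetI)
    fix v
    assume "v \<in> S"
    with assms(2,4) have "1 \<le> v"
      by (auto simp: Suc_le_eq intro: Nat.gr0I)
    with below \<open>v \<in> S\<close> show "int v \<in> insert (int X) {1..int Y}"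
      by auto
  qed
  ultimately show ?thesis
    using \<open>X \<in> S\<close> by (intro exI[of _ "int X"] exI[of _ "int Y"]) (auto simp flip: of_nat_power)
qed

lemma strongly_three_separating_if_square_sparse:
  assumes "square_sparse M" "0 \<notin> M" "infinite M \<or> 3 \<le> card M"
  shows "strongly_three_separating M"
  unfolding strongly_three_separating_def three_separating_def
proof (intro conjI assms ballI impI)
  fix m1 m2 m3 n1 n2 n3
  assume "m1 \<in> M" "m2 \<in> M" "m3 \<in> M" "n1 \<in> M" "n2 \<in> M" "n3 \<in> M"
    and distinct: "m1 \<noteq> m2 \<and> m1 \<noteq> m3 \<and> m2 \<noteq> m3 \<and> n1 \<noteq> n2 \<and> n1 \<noteq> n3 \<and> n2 \<noteq> n3"
  then have "\<exists>X Y :: int. 1 \<le> Y \<and> 4 * Y\<^sup>2 < X \<and> int ` {m1, m2, m3, n1, n2, n3} \<subseteq> insert X {1..Y}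
      \<and> X \<in> int ` {m1, m2, m3, n1, n2, n3}"
    by (intro square_sparse_split[OF assms(1,2), of _ m1 m2]) auto
  then obtain X Y :: int where "1 \<le> Y" "4 * Y\<^sup>2 < X"
    "{int m1, int m2, int m3, int n1, int n2, int n3} \<subseteq> insert X {1..Y}" "X \<in> {int m1, int m2, int m3, int n1, int n2, int n3}"
    by auto
  from det3_eq_zero_imp_eq[OF this] distinct
  show "int n2 * (int m3 - int m1) = int n1 * (int m3 - int m2) + int n3 * (int m2 - int m1)
      \<longleftrightarrow> (m1, m2, m3) = (n1, n2, n3)"
    by (auto simp: three_separating_equation_iff_det3 det3_def)
next
  fix m1 m2 n1 n2
  assume "m1 \<in> M" "m2 \<in> M" "n1 \<in> M" "n2 \<in> M" and distinct: "m1 \<noteq> m2 \<and> n1 \<noteq> n2"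
  then have "\<exists>X Y :: int. 1 \<le> Y \<and> 4 * Y\<^sup>2 < X \<and> int ` {m1, m2, n1, n2} \<subseteq> insert X {1..Y}
      \<and> X \<in> int ` {m1, m2, n1, n2}"
    by (intro square_sparse_split[OF assms(1,2), of _ m1 m2]) auto
  then obtain X Y :: int where "1 \<le> Y" "4 * Y\<^sup>2 < X"
    "{int m1, int m2, int n1, int n2} \<subseteq> insert X {1..Y}" "X \<in> {int m1, int m2, int n1, int n2}"
    by auto
  from difference_eq_imp_eq[OF this] distinct
  show "int m1 - int m2 + int n2 - int n1 = 0 \<longleftrightarrow> (m1, m2) = (n1, n2)"
    by auto
qed

fun square_sparse_seq :: "nat \<Rightarrow> nat" where
  "square_sparse_seq 0 = 1"
| "square_sparse_seq (Suc k) = 4 * (square_sparse_seq k)\<^sup>2 + 1"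

lemma strict_mono_square_sparse_seq: "strict_mono square_sparse_seq"
  unfolding strict_mono_Suc_iff
proof
  fix k
  have "square_sparse_seq k \<le> (square_sparse_seq k)\<^sup>2"
    by (simp add: power2_eq_square le_square)
  then show "square_sparse_seq k < square_sparse_seq (Suc k)"
    by simp
qed

lemma square_sparse_range_square_sparse_seq: "square_sparse (range square_sparse_seq)"
  unfolding square_sparse_def
proof (intro ballI impI)
  fix x y
  assume "x \<in> range square_sparse_seq" "y \<in> range square_sparse_seq" "y < x"
  then obtain i j where "x = square_sparse_seq j" "y = square_sparse_seq i" "i < j"
    using strict_mono_square_sparse_seq by (auto simp: strict_mono_less)
  then obtain k where "x = square_sparse_seq (Suc k)" "i \<le> k"
    by (metis less_imp_Suc_add le_add1)
  then have "y\<^sup>2 \<le> (square_sparse_seq k)\<^sup>2"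
    using \<open>y = square_sparse_seq i\<close> strict_mono_square_sparse_seq
    by (simp add: strict_mono_less_eq power2_nat_le_eq_le)
  with \<open>x = square_sparse_seq (Suc k)\<close> show "4 * y\<^sup>2 < x"
    using square_sparse_seq.simps(2)[of k] by linarith
qed

theorem corollary2p5:
  shows "\<exists>M :: nat set. infinite M \<and> strongly_three_separating M \<and> 1 \<in> M"
proof (intro exI conjI)
  let ?M = "range square_sparse_seq"
  show "infinite ?M"
    using finite_imageD[of square_sparse_seq UNIV] strict_mono_imp_inj_on[OF strict_mono_square_sparse_seq]
    by auto
  moreover have "square_sparse_seq k \<noteq> 0" for k
    by (cases k) auto
  then have "0 \<notin> ?M"
    by (metis rangeE)
  ultimately show "strongly_three_separating ?M"
    using strongly_three_separating_if_square_sparse square_sparse_range_square_sparse_seq by blast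
  show "1 \<in> ?M"
    using square_sparse_seq.simps(1) by (metis rangeI)
qed

end
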